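(* Let $\Delta\ge 4$ be an integer, put $t=\left\lfloor\frac{\Delta+3}{2}\right\rfloor$, and for positive integers $i,j$ define \[ F(i,j)=(4\Delta-6)\Bigl(\frac{1}{i}+\frac{1}{j}\Bigr)+\Delta^2-6\Delta+3+\frac{6}{\Delta}-(i-j)^2 . \] Then for all integers $1\le p\le q\le t$ we have $F(p,q)\ge F(3,\Delta)$. *)

theory Defs
  imports Complex_Main
begin

definition F :: "int \<Rightarrow> int \<Rightarrow> int \<Rightarrow> real" where
  "F \<Delta> i j = (4 * of_int \<Delta> - 6) * (1 / of_int i + 1 / of_int j)
     + (of_int \<Delta>)\<^sup>2 - 6 * of_int \<Delta> + 3 + 6 / of_int \<Delta> - (of_int i - of_int j)\<^sup>2"

end

theory Submission
  imports Defs
begin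

text \<open>For \<open>\<Delta> \<ge> 8\<close> the two terms of \<open>F \<Delta> p q\<close> are bounded separately over the whole range:
  \<open>1/p + 1/q \<ge> 2/q \<ge> 4/(\<Delta>+3)\<close> and \<open>(p - q)\<^sup>2 \<le> ((\<Delta>+1)/2)\<^sup>2\<close>. The resulting lower bound still
  dominates \<open>F \<Delta> 3 \<Delta>\<close>, the difference being a quartic in \<open>\<Delta>\<close> that is positive from \<open>\<Delta> = 8\<close> on
  (it is negative at \<open>\<Delta> = 7\<close>). The remaining cases \<open>4 \<le> \<Delta> \<le> 7\<close> leave only \<open>q \<le> 5\<close> and are
  checked directly.\<close>

definition F_range_bound :: "int \<Rightarrow> real" where
  "F_range_bound \<Delta> = 4 * (4 * of_int \<Delta> - 6) / (of_int \<Delta> + 3) - (of_int \<Delta> + 1)\<^sup>2 / 4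
     + (of_int \<Delta>)\<^sup>2 - 6 * of_int \<Delta> + 3 + 6 / of_int \<Delta>"

lemma F_ge_range_bound:
  fixes \<Delta> p q :: int
  assumes "\<Delta> \<ge> 2" and "1 \<le> p" and "p \<le> q" and "2 * q \<le> \<Delta> + 3"
  shows "F \<Delta> p q \<ge> F_range_bound \<Delta>"
proof -
  define x where "x = real_of_int \<Delta>"
  have q_le: "2 * real_of_int q \<le> x + 3" and p: "1 \<le> real_of_int p" "real_of_int p \<le> real_of_int q"
    using assms by (simp_all add: x_def)
  have "4 / (x + 3) \<le> 2 / real_of_int q"
    using q_le p by (simp add: field_simps)
  also have "\<dots> \<le> 1 / real_of_int p + 1 / real_of_int q"
    using divide_left_mono[of "real_of_int p" "real_of_int q" 1] p by simp
  finally have "(4 * x - 6) * (4 / (x + 3)) \<le> (4 * x - 6) * (1 / real_of_int p + 1 / real_of_int q)"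
    using assms(1) by (intro mult_left_mono) (auto simp: x_def)
  moreover have "(real_of_int p - real_of_int q)\<^sup>2 \<le> ((x + 1) / 2)\<^sup>2"
    using p q_le by (intro power2_le_iff_abs_le[THEN iffD2]) auto
  ultimately show ?thesis
    unfolding F_def F_range_bound_def x_def[symmetric] by (simp add: power_divide)
qed

lemma F_3_Delta_le_range_bound:
  fixes \<Delta> :: int
  assumes "\<Delta> \<ge> 8"
  shows "F \<Delta> 3 \<Delta> \<le> F_range_bound \<Delta>"
proof -
  define x where "x = real_of_int \<Delta>"
  have x: "x \<ge> 8"
    using assms by (simp add: x_def)
  have difference: "4 * (4 * x - 6) / (x + 3) - (x + 1)\<^sup>2 / 4 - ((4 * x - 6) * (1 / 3 + 1 / x) - (x - 3)\<^sup>2)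
      = (x\<^sup>2 * (x * (9 * x - 67) - 9) + 27 * x + 216) / (12 * x * (x + 3))"
    using x by (simp add: field_simps) (simp add: algebra_simps power2_eq_square)
  have "x * (9 * x - 67) \<ge> 8 * 5"
    using x by (intro mult_mono) auto
  then have "x\<^sup>2 * (x * (9 * x - 67) - 9) \<ge> 0"
    by simp
  with x have "4 * (4 * x - 6) / (x + 3) - (x + 1)\<^sup>2 / 4 - ((4 * x - 6) * (1 / 3 + 1 / x) - (x - 3)\<^sup>2) \<ge> 0"
    unfolding difference by simp
  then show ?thesis
    unfolding F_def F_range_bound_def x_def[symmetric] by (simp add: power2_commute)
qed

lemma F_small_Delta:
  fixes \<Delta> p q :: int
  assumes "4 \<le> \<Delta>" and "\<Delta> \<le> 7" and "1 \<le> p" and "p \<le> q" and "2 * q \<le> \<Delta> + 3"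
  shows "F \<Delta> p q \<ge> F \<Delta> 3 \<Delta>"
proof -
  have "\<Delta> \<in> {4..7}" "q \<in> {1..5}" "p \<in> {1..5}"
    using assms by auto
  then have "\<Delta> \<in> {4, 5, 6, 7}" "q \<in> {1, 2, 3, 4, 5}" "p \<in> {1, 2, 3, 4, 5}"
    by (auto simp: atLeastAtMost_iff)
  with assms(4,5) show ?thesis
    by (elim insertE emptyE) (simp_all add: F_def)
qed

theorem lemma4p5:
  fixes \<Delta> p q :: int
  assumes "\<Delta> \<ge> 4"
    and "1 \<le> p" and "p \<le> q" and "q \<le> \<lfloor>(of_int \<Delta> + 3) / (2::real)\<rfloor>"
  shows "F \<Delta> p q \<ge> F \<Delta> 3 \<Delta>"
proof -
  have "2 * q \<le> \<Delta> + 3"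
    using assms(4) by (simp add: le_floor_iff)
  show ?thesis
  proof (cases "\<Delta> \<ge> 8")
    case True
    have "\<Delta> \<ge> 2"
      using True by simp
    from F_3_Delta_le_range_bound[OF True]
      and F_ge_range_bound[OF this assms(2,3) \<open>2 * q \<le> \<Delta> + 3\<close>]
    show ?thesis
      by (rule order_trans)
  next
    case False
    with assms \<open>2 * q \<le> \<Delta> + 3\<close> show ?thesis
      by (intro F_small_Delta) auto
  qed
qed

end
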